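(* For every $n\ge1$, $\mathbb P(I_n=1)\ge\frac12$, and the inequality is strict for every $n\ge2$.
   Context: Let $\mathcal X=\{A,B,C,D\}$ and let $(X_i)_{i\ge1}$ be the first-order Markov chain on $\mathcal X$ with $\mathbb P(X_1=x)=1/4$ for all $x$ and transitions: from $A$ to $A$ or $C$ w.p. $1/2$ each; from $B$ to $B$ or $D$ w.p. $1/2$ each; from $C$ and from $D$ to each of $A,B,C,D$ w.p. $1/4$. A nonempty string is admissible if all consecutive transitions have positive probability; $\mathcal A$ is the set of admissible nonempty strings; $K(u):=-\log_2\mathbb P(X_1^m=u)$ for $u=x_1^m\in\mathcal A$. Shortlex source code $C$: order nonempty binary strings by length then lexicographically as $b_1,b_2,\dots$; order $\mathcal A$ as $u_1,u_2,\dots$ by increasing $K$, then increasing length, then lexicographically with $A<B<C<D$; set $C(u_j):=b_j$ (the code $C$ is distinct from the symbol $C$). Let $K_n:=K(X_1^n)$, $L_n:=|C(X_1^n)|$ and $I_n:=\mathbf 1\{L_n=K_n-1\}$. *)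

theory Defs
  imports Complex_Main
begin

datatype sym = A | B | C | D

fun sym_idx :: "sym \<Rightarrow> nat" where
  "sym_idx A = 0" | "sym_idx B = 1" | "sym_idx C = 2" | "sym_idx D = 3"

definition init :: "sym \<Rightarrow> real" where
  "init x = 1/4"

fun trans :: "sym \<Rightarrow> sym \<Rightarrow> real" where
  "trans A y = (if y = A \<or> y = C then 1/2 else 0)"
| "trans B y = (if y = B \<or> y = D then 1/2 else 0)"
| "trans C y = 1/4"
| "trans D y = 1/4"

fun path_prob :: "sym \<Rightarrow> sym list \<Rightarrow> real" where
  "path_prob x [] = 1"
| "path_prob x (y # ys) = trans x y * path_prob y ys"

fun str_prob :: "sym list \<Rightarrow> real" where
  "str_prob [] = 1"
| "str_prob (x # xs) = init x * path_prob x xs"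

definition admissible :: "sym list \<Rightarrow> bool" where
  "admissible u \<longleftrightarrow> u \<noteq> [] \<and> (\<forall>i. Suc i < length u \<longrightarrow> trans (u ! i) (u ! Suc i) > 0)"

definition Kc :: "sym list \<Rightarrow> real" where
  "Kc u = - log 2 (str_prob u)"

definition sym_lex_less :: "sym list \<Rightarrow> sym list \<Rightarrow> bool" where
  "sym_lex_less v u \<longleftrightarrow> (map sym_idx v, map sym_idx u) \<in> lexord {(a, b). a < b}"

definition adm_prec :: "sym list \<Rightarrow> sym list \<Rightarrow> bool" where
  "adm_prec v u \<longleftrightarrow> Kc v < Kc u \<or> (Kc v = Kc u \<and> (length v < length u \<or>
      (length v = length u \<and> sym_lex_less v u)))"

definition adm_index :: "sym list \<Rightarrow> nat" where
  "adm_index u = card {v. admissible v \<and> adm_prec v u} + 1"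

text \<open>Shortlex order on binary strings (False = 0 < True = 1).\<close>
definition bin_prec :: "bool list \<Rightarrow> bool list \<Rightarrow> bool" where
  "bin_prec v w \<longleftrightarrow> length v < length w \<or>
     (length v = length w \<and> (v, w) \<in> lexord {(a, b). a < b})"

definition bin_index :: "bool list \<Rightarrow> nat" where
  "bin_index w = card {v. v \<noteq> [] \<and> bin_prec v w} + 1"

text \<open>The shortlex source code: C(u_j) = b_j.\<close>
definition code :: "sym list \<Rightarrow> bool list" where
  "code u = (THE w. w \<noteq> [] \<and> bin_index w = adm_index u)"

text \<open>I_n = 1 iff L_n = K_n - 1, where L_n = |C(X_1^n)| and K_n = K(X_1^n);
  its probability is the sum of P(X_1^n = u) over (admissible) u of length n with this property.\<close>
definition prob_I :: "nat \<Rightarrow> real" where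
  "prob_I n = (\<Sum>u\<in>{u. length u = n \<and> admissible u}.
      if real (length (code u)) = Kc u - 1 then str_prob u else 0)"

end

(* Write n = N + 1. An admissible string of length n with i heavy symbols (C or D) among its
   first N has K = N + 2 + i, and there are 4 * C(N,i) * 2^i of them, so each such cell carries
   probability C(N,i) / 2^N. The strings with K = h + 2 number 4 * J(h+1), J the Jacobsthal
   numbers, and the shortlex code gives exactly the first half of them, ordered by length and then
   lexicographically, codewords of length K - 1. Hence P(I_n = 1) = 1/2 + sum_i excess N i, where
   excess N i weighs the good strings of cell i against half of the cell. A cell with 2i >= N + 2
   consists of good strings only, because the longer strings are in the majority at its level,
   a positivity property of alternating diagonal sums of Pascal's triangle that follows from the
   identity jpart_Suc_add. It compensates the symmetric cell N - i of equal mass, and the middle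
   cells contribute strictly positively once N >= 1. *)

theory Submission
  imports Defs "HOL-Library.List_Lexorder"
begin

section \<open>Counting lists and ranks\<close>

lemma finite_length_le: "finite {xs :: 'a :: finite list. length xs \<le> n}"
  using finite_lists_length_le[OF finite_UNIV, of n] by simp

lemma finite_length_eq: "finite {xs :: 'a :: finite list. length xs = n}"
  using finite_lists_length_eq[OF finite_UNIV, of n] by simp

lemma card_length_eq: "card {xs :: 'a :: finite list. length xs = n} = card (UNIV :: 'a set) ^ n"
  using card_lists_length_eq[OF finite_UNIV, of n] by simp

lemma card_eq_sum_card_fibres:
  "finite S \<Longrightarrow> finite T \<Longrightarrow> f ` S \<subseteq> T \<Longrightarrow> card S = (\<Sum>y\<in>T. card {x \<in> S. f x = y})"
  using sum.group[of S T f "\<lambda>_. 1 :: nat"] by simp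

lemma snoc_image:
  "{xs. length xs = Suc n \<and> last xs = y \<and> P xs} = (\<lambda>xs. xs @ [y]) ` {xs. length xs = n \<and> P (xs @ [y])}"
  by (auto simp: length_Suc_conv_rev)

lemma rank_strict_mono:
  fixes f :: "'a \<Rightarrow> 'b :: linorder"
  assumes "finite S" and "x \<in> S" and "f x < f z"
  shows "card {y \<in> S. f y < f x} < card {y \<in> S. f y < f z}"
proof (rule psubset_card_mono)
  show "finite {y \<in> S. f y < f z}"
    using assms(1) by simp
  have "{y \<in> S. f y < f x} \<subseteq> {y \<in> S. f y < f z}"
    using less_trans[OF _ assms(3)] by blast
  moreover have "x \<in> {y \<in> S. f y < f z} - {y \<in> S. f y < f x}"
    using assms(2,3) by simp
  ultimately show "{y \<in> S. f y < f x} \<subset> {y \<in> S. f y < f z}"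
    by blast
qed

lemma bij_betw_rank:
  fixes f :: "'a \<Rightarrow> 'b :: linorder"
  assumes "finite S" and "inj_on f S"
  shows "bij_betw (\<lambda>x. card {y \<in> S. f y < f x}) S {..<card S}"
proof -
  let ?r = "\<lambda>x. card {y \<in> S. f y < f x}"
  have inj: "inj_on ?r S"
  proof (rule inj_onI)
    fix x z
    assume xz: "x \<in> S" "z \<in> S" "?r x = ?r z"
    show "x = z"
    proof (rule ccontr)
      assume "x \<noteq> z"
      then have "f x \<noteq> f z"
        using inj_onD[OF assms(2)] xz by blast
      then consider "f x < f z" | "f z < f x"
        by (rule linorder_neqE)
      then show False
        using rank_strict_mono[OF assms(1), where f=f and x=x and z=z]
          rank_strict_mono[OF assms(1), where f=f and x=z and z=x] xz
        by cases auto
    qed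
  qed
  have "?r x < card S" if "x \<in> S" for x
  proof (rule psubset_card_mono)
    show "{y \<in> S. f y < f x} \<subset> S"
      using that by auto
  qed (rule assms(1))
  then have "?r ` S \<subseteq> {..<card S}"
    by auto
  moreover have "card (?r ` S) = card {..<card S}"
    by (simp add: card_image[OF inj])
  ultimately have "?r ` S = {..<card S}"
    by (intro card_subset_eq) simp_all
  with inj show ?thesis
    unfolding bij_betw_def by blast
qed

lemma card_rank_less:
  fixes f :: "'a \<Rightarrow> 'b :: linorder"
  assumes "finite S" and "inj_on f S"
  shows "card {x \<in> S. card {y \<in> S. f y < f x} < b} = min (card S) b"
proof -
  let ?r = "\<lambda>x. card {y \<in> S. f y < f x}"
  have bij: "bij_betw ?r S {..<card S}"
    by (rule bij_betw_rank[OF assms])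
  then have "inj_on ?r {x \<in> S. ?r x < b}" and image: "?r ` S = {..<card S}"
    by (auto simp: bij_betw_def intro: inj_on_subset)
  then have "card {x \<in> S. ?r x < b} = card (?r ` {x \<in> S. ?r x < b})"
    by (simp add: card_image)
  also have "?r ` {x \<in> S. ?r x < b} = {m \<in> ?r ` S. m < b}"
    by blast
  also have "\<dots> = {..<min (card S) b}"
    unfolding image by auto
  finally show ?thesis
    by simp
qed

section \<open>Diagonal sums of Pascal's triangle\<close>

definition jterm :: "nat \<Rightarrow> nat \<Rightarrow> nat" where
  "jterm h j = (h - j choose j) * 2 ^ j"

definition jpart :: "nat \<Rightarrow> nat \<Rightarrow> nat" where
  "jpart h k = (\<Sum>j<k. jterm h j)"

text \<open>jac h is the Jacobsthal number J_(h+1), the weighted diagonal sum of Pascal's triangle.\<close>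
definition jac :: "nat \<Rightarrow> nat" where
  "jac h = jpart h (Suc h)"

definition binom_psum :: "nat \<Rightarrow> nat \<Rightarrow> nat" where
  "binom_psum t k = (\<Sum>b<k. t choose b)"

lemma jterm_0 [simp]: "jterm h 0 = 1"
  by (simp add: jterm_def)

lemma jterm_eq_binomial: "h = t + j \<Longrightarrow> jterm h j = (t choose j) * 2 ^ j"
  by (simp add: jterm_def)

lemma jterm_eq_0: "h < 2 * j \<Longrightarrow> jterm h j = 0"
  by (simp add: jterm_def)

lemma jterm_Suc_Suc: "jterm (Suc (Suc h)) (Suc j) = jterm (Suc h) (Suc j) + 2 * jterm h j"
proof (cases "j \<le> h")
  case True
  then have "Suc (Suc h) - Suc j = Suc (h - j)" "Suc h - Suc j = h - j" by auto
  then show ?thesis by (simp add: jterm_def algebra_simps)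
qed (simp add: jterm_def)

lemma jpart_Suc: "jpart h (Suc k) = jpart h k + jterm h k"
  by (simp add: jpart_def)

lemma jpart_Suc_Suc: "jpart (Suc (Suc h)) (Suc k) = jpart (Suc h) (Suc k) + 2 * jpart h k"
  unfolding jpart_def sum.lessThan_Suc_shift by (simp add: jterm_Suc_Suc sum.distrib sum_distrib_left)

lemma jpart_mono: "k \<le> k' \<Longrightarrow> jpart h k \<le> jpart h k'"
  unfolding jpart_def by (rule sum_mono2) auto

lemma jpart_stable: "h < 2 * k \<Longrightarrow> k \<le> k' \<Longrightarrow> jpart h k' = jpart h k"
  unfolding jpart_def by (rule sum.mono_neutral_right) (auto simp: jterm_eq_0)

lemma jpart_eq_jac: "jpart h k = jac h" if "h < 2 * k"
proof (cases "k \<le> Suc h")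
  case True
  then show ?thesis using jpart_stable[of h k "Suc h"] that by (simp add: jac_def)
next
  case False
  then show ?thesis using jpart_stable[of h "Suc h" k] by (simp add: jac_def)
qed

lemma jpart_le_jac: "jpart h k \<le> jac h"
proof (cases "k \<le> Suc h")
  case True
  then show ?thesis unfolding jac_def by (rule jpart_mono)
qed (simp add: jpart_eq_jac)

lemma jac_Suc_Suc: "jac (Suc (Suc h)) = jac (Suc h) + 2 * jac h"
  using jpart_Suc_Suc[of h "Suc h"] by (simp add: jpart_eq_jac)

lemma jac_0 [simp]: "jac 0 = 1"
  by (simp add: jac_def jpart_def)

lemma jac_Suc_0 [simp]: "jac (Suc 0) = 1"
  by (simp add: jac_def jpart_def jterm_def eval_nat_numeral)

lemma jac_Suc_add: "jac (Suc h) + jac h = 2 ^ Suc h"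
  by (induction h) (simp_all add: jac_Suc_Suc)

lemma jac_pos: "0 < jac h"
proof -
  have "jterm h 0 \<le> jac h"
    unfolding jac_def jpart_def by (rule member_le_sum) auto
  then show ?thesis by simp
qed

lemma jac_le: "jac h \<le> 2 ^ h"
proof (cases h)
  case (Suc k)
  then show ?thesis using jac_Suc_add[of k] jac_pos[of k] by simp
qed simp

lemma binom_psum_Suc_Suc: "binom_psum (Suc t) (Suc k) = binom_psum t (Suc k) + binom_psum t k"
  unfolding binom_psum_def sum.lessThan_Suc_shift by (simp add: sum.distrib)

lemma binom_psum_0_left [simp]: "binom_psum 0 (Suc k) = 1"
  unfolding binom_psum_def by (induction k) auto

lemma binom_psum_mono: "k \<le> k' \<Longrightarrow> binom_psum t k \<le> binom_psum t k'"
  unfolding binom_psum_def by (rule sum_mono2) auto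

lemma binom_psum_full: "t < k \<Longrightarrow> binom_psum t k = 2 ^ t"
proof -
  assume "t < k"
  then have "binom_psum t k = (\<Sum>b\<le>t. t choose b)"
    unfolding binom_psum_def by (intro sum.mono_neutral_right) auto
  then show ?thesis by (simp add: choose_row_sum)
qed

lemma binom_psum_reflect: "k \<le> Suc t \<Longrightarrow> binom_psum t k + binom_psum t (Suc t - k) = 2 ^ t"
proof -
  assume k: "k \<le> Suc t"
  have "(\<Sum>b\<in>{k..<Suc t}. t choose b) = binom_psum t (Suc t - k)"
    unfolding binom_psum_def
  proof (rule sum.reindex_bij_witness[where i="\<lambda>c. t - c" and j="\<lambda>b. t - b"])
    fix b :: nat
    assume "b \<in> {k..<Suc t}"
    then show "t choose (t - b) = t choose b"
      using binomial_symmetric[of b t] by simp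
  qed auto
  moreover have "binom_psum t k + (\<Sum>b\<in>{k..<Suc t}. t choose b) = (\<Sum>b<Suc t. t choose b)"
    unfolding binom_psum_def using k by (metis atLeast0LessThan sum.atLeastLessThan_concat zero_le)
  ultimately show ?thesis
    by (simp add: choose_row_sum lessThan_Suc_atMost)
qed

lemma jpart_Suc_add: "k \<le> Suc h \<Longrightarrow> jpart (Suc h) k + jpart h k = 2 ^ k * binom_psum (Suc h - k) k"
proof (induction h arbitrary: k rule: less_induct)
  case (less h)
  consider "k = Suc h" | "k < 2" | "2 \<le> k" "k \<le> h"
    using less.prems by linarith
  then show ?case
  proof cases
    case 1
    then show ?thesis using jac_Suc_add[of h] by (simp add: jpart_eq_jac)
  next
    case 2
    then have "k = 0 \<or> k = 1" by auto
    then show ?thesis by (auto simp: jpart_def binom_psum_def)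
  next
    case 3
    define k' g where "k' = k - 2" and "g = h - 2"
    with 3 have k: "k = Suc (Suc k')" and g: "h = Suc (Suc g)" and "k' \<le> g"
      by auto
    have ih1: "jpart h k + jpart (Suc g) k = 2 ^ k * binom_psum (h - k) k"
      using less.IH[of "Suc g" k] k g \<open>k' \<le> g\<close> by simp
    have ih2: "jpart (Suc g) (Suc k') + jpart g (Suc k') = 2 ^ Suc k' * binom_psum (h - k) (Suc k')"
      using less.IH[of g "Suc k'"] k g \<open>k' \<le> g\<close> by simp
    have "jpart (Suc h) k + jpart h k
        = (jpart h k + jpart (Suc g) k) + 2 * (jpart (Suc g) (Suc k') + jpart g (Suc k'))"
      using jpart_Suc_Suc[of "Suc g" "Suc k'"] jpart_Suc_Suc[of g "Suc k'"] k g by simp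
    also have "\<dots> = 2 ^ k * (binom_psum (h - k) k + binom_psum (h - k) (Suc k'))"
      using ih1 ih2 k by (simp add: algebra_simps)
    also have "\<dots> = 2 ^ k * binom_psum (Suc (h - k)) k"
      using binom_psum_Suc_Suc[of "h - k" "Suc k'"] k by simp
    also have "Suc (h - k) = Suc h - k"
      using 3 by simp
    finally show ?thesis .
  qed
qed

text \<open>4 * jbal h k is the number of admissible strings with K = h + 2 and fewer than k heavy
  symbols, i.e. the longer ones, minus the number of the remaining, shorter ones.\<close>
definition jbal :: "nat \<Rightarrow> nat \<Rightarrow> int" where
  "jbal h k = 2 * int (jpart h k) - int (jac h)"

definition binom_bal :: "nat \<Rightarrow> nat \<Rightarrow> int" where
  "binom_bal t k = 2 * int (binom_psum t k) - 2 ^ t"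

lemma jbal_Suc: "jbal h (Suc k) = jbal h k + 2 * int (jterm h k)"
  by (simp add: jbal_def jpart_Suc)

lemma jbal_eq_jac: "h < k \<Longrightarrow> jbal h k = int (jac h)"
  by (simp add: jbal_def jpart_eq_jac)

lemma jbal_Suc_add: "k \<le> Suc h \<Longrightarrow> jbal (Suc h) k + jbal h k = 2 ^ k * binom_bal (Suc h - k) k"
proof -
  assume k: "k \<le> Suc h"
  have "int (jpart (Suc h) k) + int (jpart h k) = 2 ^ k * int (binom_psum (Suc h - k) k)"
    using arg_cong[where f=int, OF jpart_Suc_add[OF k]] by simp
  moreover have "int (jac (Suc h)) + int (jac h) = 2 ^ k * 2 ^ (Suc h - k)"
    using arg_cong[where f=int, OF jac_Suc_add[of h]] k by (simp flip: power_add)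
  ultimately show ?thesis
    unfolding jbal_def binom_bal_def by (simp add: algebra_simps)
qed

lemma binom_bal_Suc_Suc: "binom_bal (Suc t) (Suc k) = binom_bal t (Suc k) + binom_bal t k"
  by (simp add: binom_bal_def binom_psum_Suc_Suc)

lemma binom_bal_nonneg: "t < 2 * k \<Longrightarrow> 0 \<le> binom_bal t k"
proof (cases "k \<le> Suc t")
  case True
  assume "t < 2 * k"
  then have "binom_psum t (Suc t - k) \<le> binom_psum t k"
    by (intro binom_psum_mono) simp
  then have "2 ^ t \<le> 2 * binom_psum t k"
    using binom_psum_reflect[OF True] by linarith
  then have "int (2 ^ t) \<le> int (2 * binom_psum t k)"
    by (simp only: of_nat_le_iff)
  then show ?thesis
    unfolding binom_bal_def by simp
qed (simp add: binom_bal_def binom_psum_full)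

lemma binom_bal_odd_half: "binom_bal (Suc (2 * m)) (Suc m) = 0"
proof -
  have "2 * binom_psum (2 * m + 1) (m + 1) = 2 ^ (2 * m + 1)"
    using binom_psum_reflect[of "m + 1" "2 * m + 1"] by simp
  then have "int (2 * binom_psum (2 * m + 1) (m + 1)) = int (2 ^ (2 * m + 1))"
    by (rule arg_cong)
  then show ?thesis
    unfolding binom_bal_def by simp
qed

lemma binom_bal_even_half: "binom_bal (2 * p) p = - int (2 * p choose p)"
proof -
  have "binom_psum (2 * p) (Suc p) = binom_psum (2 * p) p + (2 * p choose p)"
    by (simp add: binom_psum_def)
  then have "2 * binom_psum (2 * p) p + (2 * p choose p) = 2 ^ (2 * p)"
    using binom_psum_reflect[of p "2 * p"] by simp
  then have "int (2 * binom_psum (2 * p) p + (2 * p choose p)) = int (2 ^ (2 * p))"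
    by (rule arg_cong)
  then show ?thesis
    unfolding binom_bal_def by simp
qed

text \<open>Along h = k, k + 1, ..., each balance jbal h (k + 1) lies strictly between 0 and
  2^(k+1) * binom_bal (h - k) (k + 1): by jbal_Suc_add the next one is the reflection of the
  current one in that bound, and the bounds increase while h - k stays below 2 * k.\<close>
lemma jbal_pos_aux:
  "d \<le> 2 * k + 1 \<Longrightarrow> 0 < jbal (k + d) (Suc k) \<and>
     (d \<le> 2 * k \<longrightarrow> jbal (k + d) (Suc k) < 2 ^ Suc k * binom_bal d (Suc k))"
proof (induction d)
  case 0
  have "jac k < 2 ^ Suc k"
    using jac_le[of k] by (simp add: le_less_trans)
  then have "int (jac k) < int (2 ^ Suc k)"
    by (simp only: of_nat_less_iff)
  then show ?case
    using jac_pos[of k] by (simp add: jbal_eq_jac binom_bal_def)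
next
  case (Suc d)
  have step: "jbal (k + Suc d) (Suc k) = 2 ^ Suc k * binom_bal d (Suc k) - jbal (k + d) (Suc k)"
    using jbal_Suc_add[of "Suc k" "k + d"] by simp
  have ih: "0 < jbal (k + d) (Suc k)" "jbal (k + d) (Suc k) < 2 ^ Suc k * binom_bal d (Suc k)"
    using Suc by auto
  have mono: "2 ^ Suc k * binom_bal d (Suc k) \<le> 2 ^ Suc k * binom_bal (Suc d) (Suc k)"
    if "Suc d \<le> 2 * k"
    using binom_bal_Suc_Suc[of d k] binom_bal_nonneg[of d k] that
    by (intro mult_left_mono) simp_all
  have "0 < jbal (k + Suc d) (Suc k)"
    using step ih by linarith
  moreover have "jbal (k + Suc d) (Suc k) < 2 ^ Suc k * binom_bal (Suc d) (Suc k)"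
    if "Suc d \<le> 2 * k"
    using step ih mono[OF that] by linarith
  ultimately show ?case
    by blast
qed

lemma jbal_pos: "1 \<le> k \<Longrightarrow> h + 2 \<le> 3 * k \<Longrightarrow> 0 < jbal h k"
proof -
  assume k: "1 \<le> k" "h + 2 \<le> 3 * k"
  show ?thesis
  proof (cases "h < k")
    case True
    then show ?thesis using jac_pos[of h] by (simp add: jbal_eq_jac)
  next
    case False
    then show ?thesis
      using jbal_pos_aux[of "h - (k - 1)" "k - 1"] k by simp
  qed
qed

lemma jbal_middle_even:
  assumes "0 < p"
  shows "int (jterm (3 * p) p) < jbal (3 * p) (Suc p)"
proof -
  have le: "p \<le> Suc (3 * p - 1)" "p \<le> Suc (3 * p - 2)"
    by simp_all
  have eq: "Suc (3 * p - 1) = 3 * p" "3 * p - p = 2 * p"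
    "Suc (3 * p - 2) = 3 * p - 1" "3 * p - 1 - p = Suc (2 * (p - 1))" "Suc (p - 1) = p"
    using assms by simp_all
  have "jbal (3 * p) p + jbal (3 * p - 1) p = 2 ^ p * binom_bal (2 * p) p"
    using jbal_Suc_add[OF le(1)] unfolding eq(1,2) .
  then have e1: "jbal (3 * p) p + jbal (3 * p - 1) p = - int (jterm (3 * p) p)"
    unfolding binom_bal_even_half jterm_eq_binomial[of "3 * p" "2 * p" p, simplified] by simp
  have "jbal (3 * p - 1) p + jbal (3 * p - 2) p = 2 ^ p * binom_bal (Suc (2 * (p - 1))) (Suc (p - 1))"
    using jbal_Suc_add[OF le(2)] unfolding eq(3-5) .
  then have e2: "jbal (3 * p - 1) p + jbal (3 * p - 2) p = 0"
    unfolding binom_bal_odd_half by simp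
  have "0 < jbal (3 * p - 2) p"
    using assms by (intro jbal_pos) simp_all
  then show ?thesis
    using e1 e2 jbal_Suc[of "3 * p" p] by linarith
qed

lemma jbal_middle_odd: "jbal (3 * p + 2) (Suc p) + jbal (3 * p + 1) (Suc p) = 0"
proof -
  have le: "Suc p \<le> Suc (3 * p + 1)"
    by simp
  have eq: "Suc (3 * p + 1) = 3 * p + 2" "3 * p + 2 - Suc p = Suc (2 * p)"
    by simp_all
  show ?thesis
    using jbal_Suc_add[OF le] unfolding eq by (simp add: binom_bal_odd_half)
qed

lemma jterm_middle_odd: "jterm (3 * p + 2) (Suc p) = 2 * jterm (3 * p + 1) p"
proof -
  have "jterm (3 * p + 2) (Suc p) = (2 * p + 1 choose Suc p) * 2 ^ Suc p"
    by (rule jterm_eq_binomial) simp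
  moreover have "jterm (3 * p + 1) p = (2 * p + 1 choose p) * 2 ^ p"
    by (rule jterm_eq_binomial) simp
  moreover have "(2 * p + 1 choose Suc p) = (2 * p + 1 choose p)"
    using binomial_symmetric[of "Suc p" "2 * p + 1"] by simp
  ultimately show ?thesis
    by simp
qed

section \<open>Admissible strings and their information content\<close>

lemma UNIV_sym: "(UNIV :: sym set) = {A, B, C, D}"
  using sym.exhaust by auto

instance sym :: finite
  by standard (simp add: UNIV_sym)

lemma card_UNIV_sym: "card (UNIV :: sym set) = 4"
  by (simp add: UNIV_sym)

text \<open>K(u) = info u: the first symbol costs 2 bits, a transition out of A or B costs 1 bit and
  one out of C or D (a heavy symbol) costs 2 bits.\<close>
definition heavy :: "sym list \<Rightarrow> nat" where
  "heavy u = length (filter (\<lambda>x. x \<in> {C, D}) (butlast u))"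

definition info :: "sym list \<Rightarrow> nat" where
  "info u = length u + 1 + heavy u"

lemma not_admissible_Nil [simp]: "\<not> admissible []"
  by (simp add: admissible_def)

lemma admissible_iff_successively: "admissible u \<longleftrightarrow> u \<noteq> [] \<and> successively (\<lambda>x y. 0 < trans x y) u"
  by (simp add: admissible_def successively_conv_nth)

lemma admissible_Cons_Cons: "admissible (x # y # r) \<longleftrightarrow> 0 < trans x y \<and> admissible (y # r)"
  by (simp add: admissible_iff_successively)

lemma admissible_snoc: "u \<noteq> [] \<Longrightarrow> admissible (u @ [y]) \<longleftrightarrow> admissible u \<and> 0 < trans (last u) y"
  by (auto simp: admissible_iff_successively successively_append_iff)

lemma heavy_Cons_Cons: "heavy (x # y # r) = (if x \<in> {C, D} then 1 else 0) + heavy (y # r)"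
  by (simp add: heavy_def)

lemma heavy_snoc: "u \<noteq> [] \<Longrightarrow> heavy (u @ [y]) = heavy u + (if last u \<in> {C, D} then 1 else 0)"
proof -
  assume "u \<noteq> []"
  then have "heavy (u @ [y]) = length (filter (\<lambda>x. x \<in> {C, D}) (butlast u @ [last u]))"
    by (simp add: heavy_def)
  then show ?thesis
    by (simp add: heavy_def)
qed

lemma length_pos_if_admissible: "admissible u \<Longrightarrow> 0 < length u"
  by (cases u) auto

lemma heavy_less_length: "admissible u \<Longrightarrow> heavy u < length u"
  unfolding heavy_def using length_pos_if_admissible[of u]
  by (metis length_butlast length_filter_le diff_less le_less_trans zero_less_one)

lemma trans_pos_eq: "0 < trans x y \<Longrightarrow> trans x y = (1 / 2) ^ (if x \<in> {C, D} then 2 else 1)"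
  by (cases x; cases y) (simp_all add: power2_eq_square)

lemma path_prob_eq: "admissible (x # r) \<Longrightarrow> path_prob x r = (1 / 2) ^ (length r + heavy (x # r))"
proof (induction r arbitrary: x)
  case Nil
  then show ?case by (simp add: heavy_def)
next
  case (Cons y r)
  then have "0 < trans x y" "admissible (y # r)"
    by (simp_all add: admissible_Cons_Cons)
  with Cons.IH show ?case
    by (simp add: trans_pos_eq heavy_Cons_Cons flip: power_add)
qed

lemma str_prob_eq: "admissible u \<Longrightarrow> str_prob u = (1 / 2) ^ info u"
  by (cases u) (auto simp: init_def info_def path_prob_eq power_add power2_eq_square)

lemma Kc_eq_info: "admissible u \<Longrightarrow> Kc u = real (info u)"
  by (simp add: Kc_def str_prob_eq log_nat_power log_divide)

lemma sum_predecessors: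
  fixes g :: "bool \<Rightarrow> 'a :: comm_semiring_1"
  shows "(\<Sum>x | 0 < trans x y. g (x \<in> {C, D})) = g False + 2 * g True"
proof -
  have "(\<Sum>x | 0 < trans x y. g (x \<in> {C, D})) = (\<Sum>x\<in>UNIV. if 0 < trans x y then g (x \<in> {C, D}) else 0)"
    using sum.inter_filter[of UNIV "\<lambda>x. g (x \<in> {C, D})" "\<lambda>x. 0 < trans x y"] by simp
  then show ?thesis
    by (cases y) (simp_all add: UNIV_sym mult_2)
qed

definition cell :: "nat \<Rightarrow> nat \<Rightarrow> sym list set" where
  "cell n i = {u. admissible u \<and> length u = n \<and> heavy u = i}"

lemma finite_cell: "finite (cell n i)"
  by (rule finite_subset[OF _ finite_length_le[of n]]) (auto simp: cell_def)

lemma cell_last_eq_snoc_image: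
  "{u \<in> cell (Suc (Suc t)) j. last u = y} = (\<lambda>u. u @ [y]) `
    {u. length u = Suc t \<and> admissible u \<and> 0 < trans (last u) y \<and>
        heavy u + (if last u \<in> {C, D} then 1 else 0) = j}"
proof -
  have "{u \<in> cell (Suc (Suc t)) j. last u = y}
      = {u. length u = Suc (Suc t) \<and> last u = y \<and> admissible u \<and> heavy u = j}"
    by (auto simp: cell_def)
  also have "\<dots> = (\<lambda>u. u @ [y]) ` {u. length u = Suc t \<and> admissible (u @ [y]) \<and> heavy (u @ [y]) = j}"
    by (rule snoc_image)
  also have "{u. length u = Suc t \<and> admissible (u @ [y]) \<and> heavy (u @ [y]) = j}
      = {u. length u = Suc t \<and> admissible u \<and> 0 < trans (last u) y \<and>
          heavy u + (if last u \<in> {C, D} then 1 else 0) = j}"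
  proof (rule Collect_cong)
    fix u :: "sym list"
    show "(length u = Suc t \<and> admissible (u @ [y]) \<and> heavy (u @ [y]) = j) \<longleftrightarrow>
      (length u = Suc t \<and> admissible u \<and> 0 < trans (last u) y \<and>
        heavy u + (if last u \<in> {C, D} then 1 else 0) = j)"
    proof (cases "length u = Suc t")
      case True
      then have "u \<noteq> []"
        by auto
      then show ?thesis
        by (auto simp: admissible_snoc heavy_snoc)
    qed simp
  qed
  finally show ?thesis .
qed

text \<open>Counting by the last symbol makes the recursion uniform: every symbol has exactly one
  light predecessor (A or B) and two heavy ones (C and D).\<close>
lemma card_cell_last: "card {u \<in> cell (Suc t) j. last u = y} = (t choose j) * 2 ^ j"
proof (induction t arbitrary: j y)
  case 0
  have "{u \<in> cell (Suc 0) j. last u = y} = (if j = 0 then {[y]} else {})"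
    by (auto simp: cell_def heavy_def length_Suc_conv admissible_def)
  then show ?case
    by simp
next
  case (Suc t)
  define d where "d x = (if x \<in> {C, D} then 1 else 0 :: nat)" for x
  let ?S = "{u. length u = Suc t \<and> admissible u \<and> 0 < trans (last u) y \<and> heavy u + d (last u) = j}"
  have "card {u \<in> cell (Suc (Suc t)) j. last u = y} = card ((\<lambda>u. u @ [y]) ` ?S)"
    using cell_last_eq_snoc_image[of t j y] unfolding d_def by simp
  also have "\<dots> = card ?S"
    by (simp add: card_image inj_on_def)
  also have "\<dots> = (\<Sum>x | 0 < trans x y. card {u \<in> ?S. last u = x})"
    by (rule card_eq_sum_card_fibres) (auto intro: finite_subset[OF _ finite_length_le[of "Suc t"]])
  also have "\<dots> = (\<Sum>x | 0 < trans x y. if d x \<le> j then (t choose (j - d x)) * 2 ^ (j - d x) else 0)"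
  proof (rule sum.cong)
    fix x
    assume "x \<in> {x. 0 < trans x y}"
    then have "{u \<in> ?S. last u = x} = (if d x \<le> j then {u \<in> cell (Suc t) (j - d x). last u = x} else {})"
      by (auto simp: cell_def)
    then show "card {u \<in> ?S. last u = x} = (if d x \<le> j then (t choose (j - d x)) * 2 ^ (j - d x) else 0)"
      by (simp add: Suc.IH)
  qed simp
  also have "\<dots> = (Suc t choose j) * 2 ^ j"
    unfolding d_def using sum_predecessors[of "\<lambda>b. if (if b then 1 else 0) \<le> j
      then (t choose (j - (if b then 1 else 0))) * 2 ^ (j - (if b then 1 else 0)) else 0" y]
    by (cases j) (simp_all add: algebra_simps)
  finally show ?case .
qed

lemma card_cell: "card (cell (Suc t) j) = 4 * (t choose j) * 2 ^ j"
proof -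
  have "card (cell (Suc t) j) = (\<Sum>y\<in>UNIV. card {u \<in> cell (Suc t) j. last u = y})"
    by (rule card_eq_sum_card_fibres) (simp_all add: finite_cell)
  then show ?thesis
    by (simp add: card_cell_last card_UNIV_sym)
qed

lemma length_le_info: "length u \<le> info u"
  by (simp add: info_def)

lemma finite_info_le: "finite {u. info u \<le> k}"
  by (rule finite_subset[OF _ finite_length_le[of k]]) (auto intro: le_trans[OF length_le_info])

lemma card_level_heavy: "card {u. admissible u \<and> info u = h + 2 \<and> heavy u = j} = 4 * jterm h j"
proof (cases "j \<le> h")
  case True
  then have "{u. admissible u \<and> info u = h + 2 \<and> heavy u = j} = cell (Suc (h - j)) j"
    by (auto simp: cell_def info_def)
  then show ?thesis
    by (simp add: card_cell jterm_def)
next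
  case False
  have "h + 2 < info u" if "admissible u" "heavy u = j" for u
    using that False length_pos_if_admissible[of u] unfolding info_def by linarith
  then have "{u. admissible u \<and> info u = h + 2 \<and> heavy u = j} = {}"
    by fastforce
  with False show ?thesis
    by (simp only: card.empty) (simp add: jterm_def)
qed

lemma card_level_heavy_less: "card {u. admissible u \<and> info u = h + 2 \<and> heavy u < k} = 4 * jpart h k"
proof -
  let ?L = "{u. admissible u \<and> info u = h + 2 \<and> heavy u < k}"
  have "card ?L = (\<Sum>j<k. card {u \<in> ?L. heavy u = j})"
    by (rule card_eq_sum_card_fibres) (auto intro: finite_subset[OF _ finite_info_le[of "h + 2"]])
  also have "\<dots> = (\<Sum>j<k. 4 * jterm h j)"
  proof (rule sum.cong)
    fix j
    assume "j \<in> {..<k}"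
    then have "{u \<in> ?L. heavy u = j} = {u. admissible u \<and> info u = h + 2 \<and> heavy u = j}"
      by auto
    then show "card {u \<in> ?L. heavy u = j} = 4 * jterm h j"
      using card_level_heavy[of h j] by simp
  qed simp
  finally show ?thesis
    by (simp add: jpart_def sum_distrib_left)
qed

lemma card_level: "card {u. admissible u \<and> info u = h + 2} = 4 * jac h"
proof -
  have "heavy u < Suc h" if "admissible u" "info u = h + 2" for u
    using that heavy_less_length[of u] by (auto simp: info_def)
  then have "{u. admissible u \<and> info u = h + 2} = {u. admissible u \<and> info u = h + 2 \<and> heavy u < Suc h}"
    by blast
  then show ?thesis
    using card_level_heavy_less[of h "Suc h"] by (simp add: jac_def)
qed

lemma card_info_less: "card {u. admissible u \<and> info u < h + 2} + 2 + 2 * jac h = 2 ^ (h + 2)"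
proof (induction h)
  case 0
  have "2 \<le> info u" if "admissible u" for u
    using length_pos_if_admissible[OF that] unfolding info_def by linarith
  then have "{u. admissible u \<and> info u < 0 + 2} = {}"
    by fastforce
  then show ?case
    by (simp only: card.empty) simp
next
  case (Suc h)
  have "{u. admissible u \<and> info u < Suc h + 2}
      = {u. admissible u \<and> info u < h + 2} \<union> {u. admissible u \<and> info u = h + 2}"
    by auto
  moreover have "card ({u. admissible u \<and> info u < h + 2} \<union> {u. admissible u \<and> info u = h + 2})
      = card {u. admissible u \<and> info u < h + 2} + card {u. admissible u \<and> info u = h + 2}"
    by (rule card_Un_disjoint) (auto intro: finite_subset[OF _ finite_info_le[of "h + 2"]])
  ultimately show ?case
    using Suc.IH card_level[of h] jac_Suc_add[of h] by simp
qed

section \<open>Shortlex indices and codeword lengths\<close>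

lemma bin_prec_iff: "bin_prec v w \<longleftrightarrow> length v < length w \<or> (length v = length w \<and> v < w)"
  by (simp add: bin_prec_def list_less_def)

lemma card_nonempty_shorter: "0 < L \<Longrightarrow> card {v :: bool list. v \<noteq> [] \<and> length v < L} = 2 ^ L - 2"
proof (induction L)
  case (Suc L)
  show ?case
  proof (cases "L = 0")
    case True
    then have "{v :: bool list. v \<noteq> [] \<and> length v < Suc L} = {}"
      by auto
    with True show ?thesis
      by simp
  next
    case False
    have "{v :: bool list. v \<noteq> [] \<and> length v < Suc L} = {v. v \<noteq> [] \<and> length v < L} \<union> {v. length v = L}"
      using False by auto
    moreover have "card ({v :: bool list. v \<noteq> [] \<and> length v < L} \<union> {v. length v = L})
        = card {v :: bool list. v \<noteq> [] \<and> length v < L} + card {v :: bool list. length v = L}"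
      by (rule card_Un_disjoint) (auto intro: finite_subset[OF _ finite_length_le[of L]])
    moreover have "(2 :: nat) ^ 1 \<le> 2 ^ L"
      using False by (intro power_increasing) simp_all
    ultimately show ?thesis
      using Suc.IH False by (simp add: card_length_eq)
  qed
qed simp

lemma bin_index_eq:
  "w \<noteq> [] \<Longrightarrow> bin_index w = 2 ^ length w - 1 + card {v. length v = length w \<and> v < w}"
proof -
  assume "w \<noteq> []"
  then have "{v. v \<noteq> [] \<and> bin_prec v w}
      = {v. v \<noteq> [] \<and> length v < length w} \<union> {v. length v = length w \<and> v < w}"
    by (auto simp: bin_prec_iff)
  moreover have "card ({v :: bool list. v \<noteq> [] \<and> length v < length w} \<union> {v. length v = length w \<and> v < w})
      = card {v :: bool list. v \<noteq> [] \<and> length v < length w} + card {v. length v = length w \<and> v < w}"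
    by (rule card_Un_disjoint) (auto intro: finite_subset[OF _ finite_length_le[of "length w"]])
  moreover have "(2 :: nat) ^ 1 \<le> 2 ^ length w"
    using \<open>w \<noteq> []\<close> by (intro power_increasing) (simp_all add: Suc_le_eq)
  ultimately show ?thesis
    using \<open>w \<noteq> []\<close> by (simp add: bin_index_def card_nonempty_shorter)
qed

lemma bin_index_bounds:
  assumes "w \<noteq> []"
  shows "2 ^ length w \<le> bin_index w + 1" and "bin_index w + 1 < 2 ^ Suc (length w)"
proof -
  have "card {v. length v = length w \<and> v < w} < card {v :: bool list. length v = length w}"
    by (rule psubset_card_mono) (auto intro: finite_subset[OF _ finite_length_le[of "length w"]])
  then show "2 ^ length w \<le> bin_index w + 1" "bin_index w + 1 < 2 ^ Suc (length w)"
    using bin_index_eq[OF assms] by (simp_all add: card_length_eq)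
qed

lemma length_eq_if_bin_index_bounds:
  assumes "w \<noteq> []" and "2 ^ L \<le> bin_index w + 1" and "bin_index w + 1 < 2 ^ Suc L"
  shows "length w = L"
proof -
  have b: "(2 :: nat) ^ length w < 2 ^ Suc L" "(2 :: nat) ^ L < 2 ^ Suc (length w)"
    using bin_index_bounds[OF assms(1)] assms(2,3) by linarith+
  have "length w < Suc L" "L < Suc (length w)"
    by (rule power_less_imp_less_exp[OF _ b(1)] power_less_imp_less_exp[OF _ b(2)], simp)+
  then show ?thesis
    by simp
qed

lemma length_THE_bin_index:
  assumes "0 < L" and "2 ^ L \<le> j + 1" and "j + 1 < 2 ^ Suc L"
  shows "length (THE w. w \<noteq> [] \<and> bin_index w = j) = L"
proof -
  let ?S = "{v :: bool list. length v = L}"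
  let ?r = "\<lambda>w. card {v \<in> ?S. id v < id w}"
  have bij: "bij_betw ?r ?S {..<2 ^ L}"
    using bij_betw_rank[of ?S id] card_length_eq[where 'a=bool] finite_length_eq[where 'a=bool]
    by simp
  have index: "bin_index w = 2 ^ L - 1 + ?r w" if "w \<in> ?S" for w
  proof -
    from that assms(1) have "w \<noteq> []" "length w = L"
      by auto
    moreover have "{v \<in> ?S. id v < id w} = {v. length v = length w \<and> v < w}"
      using \<open>length w = L\<close> by auto
    ultimately show ?thesis
      using bin_index_eq[OF \<open>w \<noteq> []\<close>] by (simp only:)
  qed
  have "j + 1 - 2 ^ L \<in> ?r ` ?S"
    using bij assms(2,3) by (simp add: bij_betw_def)
  then obtain w where w: "w \<in> ?S" "?r w = j + 1 - 2 ^ L"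
    by (auto simp: image_iff)
  have "bin_index w = 2 ^ L - 1 + (j + 1 - 2 ^ L)"
    using index[OF w(1)] w(2) by (simp only:)
  then have "bin_index w = j"
    using assms(2) one_le_power[of "2 :: nat" L] by linarith
  have unique: "w' = w" if "w' \<noteq> [] \<and> bin_index w' = j" for w'
  proof -
    have "w' \<in> ?S"
      using length_eq_if_bin_index_bounds[of w' L] that assms(2,3) by simp
    then have "?r w' = ?r w"
      using that index[of w'] index[of w] w(1) \<open>bin_index w = j\<close> by linarith
    then show ?thesis
      using inj_onD[OF bij_betw_imp_inj_on[OF bij]] \<open>w' \<in> ?S\<close> w(1) by blast
  qed
  have "(THE w. w \<noteq> [] \<and> bin_index w = j) = w"
    using w(1) assms(1) \<open>bin_index w = j\<close> unique by (intro the_equality) auto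
  with w(1) show ?thesis
    by simp
qed

lemma inj_sym_idx: "inj sym_idx"
proof (rule injI)
  fix x y
  show "sym_idx x = sym_idx y \<Longrightarrow> x = y"
    by (cases x; cases y) simp_all
qed

lemma sym_lex_less_iff: "sym_lex_less v u \<longleftrightarrow> map sym_idx v < map sym_idx u"
  by (simp add: sym_lex_less_def list_less_def)

definition lex_rank :: "sym list \<Rightarrow> nat" where
  "lex_rank u = card {v \<in> cell (length u) (heavy u). map sym_idx v < map sym_idx u}"

lemma adm_prec_iff:
  assumes "admissible u" and "admissible v"
  shows "adm_prec v u \<longleftrightarrow> info v < info u \<or> (info v = info u \<and>
    (heavy u < heavy v \<or> (heavy v = heavy u \<and> map sym_idx v < map sym_idx u)))"
  unfolding adm_prec_def Kc_eq_info[OF assms(1)] Kc_eq_info[OF assms(2)] sym_lex_less_iff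
  by (auto simp: info_def)

lemma adm_index_eq:
  assumes "admissible u" and "info u = h + 2"
  shows "adm_index u = card {v. admissible v \<and> info v < h + 2}
    + card {v. admissible v \<and> info v = h + 2 \<and> heavy u < heavy v} + lex_rank u + 1"
proof -
  let ?L = "{v. admissible v \<and> info v < h + 2}"
  let ?M = "{v. admissible v \<and> info v = h + 2 \<and> heavy u < heavy v}"
  let ?X = "{v \<in> cell (length u) (heavy u). map sym_idx v < map sym_idx u}"
  have "{v. admissible v \<and> adm_prec v u} = ?L \<union> ?M \<union> ?X"
    using assms adm_prec_iff[OF assms(1)] by (auto simp: cell_def info_def)
  moreover have "finite ?L" "finite ?M"
    by (auto intro: finite_subset[OF _ finite_info_le[of "h + 2"]])
  moreover have "finite ?X"
    using finite_cell by simp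
  moreover have "?L \<inter> ?M = {}" "(?L \<union> ?M) \<inter> ?X = {}"
    using assms by (auto simp: cell_def info_def)
  ultimately show ?thesis
    unfolding adm_index_def lex_rank_def by (simp add: card_Un_disjoint)
qed

lemma card_info_heavy_greater:
  "card {v. admissible v \<and> info v = h + 2 \<and> i < heavy v} = 4 * jac h - 4 * jpart h (Suc i)"
proof -
  let ?A = "{v. admissible v \<and> info v = h + 2 \<and> heavy v < Suc i}"
  let ?B = "{v. admissible v \<and> info v = h + 2 \<and> i < heavy v}"
  have "{v. admissible v \<and> info v = h + 2} = ?A \<union> ?B"
    by auto
  moreover have "card (?A \<union> ?B) = card ?A + card ?B"
    by (rule card_Un_disjoint) (auto intro: finite_subset[OF _ finite_info_le[of "h + 2"]])
  ultimately show ?thesis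
    using card_level[of h] card_level_heavy_less[of h "Suc i"] by simp
qed

lemma lex_rank_less:
  assumes "admissible u" and "info u = h + 2"
  shows "lex_rank u < 4 * jterm h (heavy u)"
proof -
  have "cell (length u) (heavy u) = {v. admissible v \<and> info v = h + 2 \<and> heavy v = heavy u}"
    using assms(2) by (auto simp: cell_def info_def)
  then have "card (cell (length u) (heavy u)) = 4 * jterm h (heavy u)"
    using card_level_heavy[of h "heavy u"] by simp
  moreover have "lex_rank u < card (cell (length u) (heavy u))"
    unfolding lex_rank_def using assms(1) finite_cell by (intro psubset_card_mono) (auto simp: cell_def)
  ultimately show ?thesis
    by simp
qed

text \<open>The strings with K = h + 2 occupy the indices from 2^(h+2) - 2 * jac h - 1 on; since
  jac h \<le> 2^h, the first 2 * jac h of them get codewords of length h + 1 and the others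
  codewords of length h + 2.\<close>
lemma code_length_iff:
  assumes "admissible u" and "info u = h + 2"
  shows "real (length (code u)) = Kc u - 1 \<longleftrightarrow> 4 * (jac h - jpart h (Suc (heavy u))) + lex_rank u < 2 * jac h"
proof -
  let ?s = "4 * (jac h - jpart h (Suc (heavy u))) + lex_rank u"
  have "jpart h (Suc (heavy u)) \<le> jac h" "jac h \<le> 2 ^ h"
    by (rule jpart_le_jac, rule jac_le)
  moreover have "lex_rank u < 4 * jterm h (heavy u)"
    using lex_rank_less[OF assms] .
  moreover have "adm_index u + 1 = 2 ^ (h + 2) - 2 * jac h + ?s"
    using adm_index_eq[OF assms] card_info_less[of h] card_info_heavy_greater[of h "heavy u"] by simp
  ultimately have bounds:
    "?s < 2 * jac h \<Longrightarrow> 2 ^ (h + 1) \<le> adm_index u + 1 \<and> adm_index u + 1 < 2 ^ Suc (h + 1)"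
    "\<not> ?s < 2 * jac h \<Longrightarrow> 2 ^ (h + 2) \<le> adm_index u + 1 \<and> adm_index u + 1 < 2 ^ Suc (h + 2)"
    using jpart_Suc[of h "heavy u"] by auto
  have "length (code u) = (if ?s < 2 * jac h then h + 1 else h + 2)"
    unfolding code_def using bounds by (auto intro: length_THE_bin_index)
  then show ?thesis
    using Kc_eq_info[OF assms(1)] assms(2) by auto
qed

section \<open>The probability of I_n = 1\<close>

definition good_count :: "nat \<Rightarrow> nat \<Rightarrow> int" where
  "good_count N i = min (4 * int (jterm (N + i) i)) (max 0 (2 * jbal (N + i) (Suc i)))"

lemma card_code_good_cell:
  "int (card {u \<in> cell (Suc N) i. real (length (code u)) = Kc u - 1}) = good_count N i"
proof -
  let ?h = "N + i"
  let ?S = "cell (Suc N) i"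
  let ?b = "2 * jac ?h - 4 * (jac ?h - jpart ?h (Suc i))"
  have "{u \<in> ?S. real (length (code u)) = Kc u - 1} = {u \<in> ?S. card {v \<in> ?S. map sym_idx v < map sym_idx u} < ?b}"
  proof (rule Collect_cong)
    fix u
    show "(u \<in> ?S \<and> real (length (code u)) = Kc u - 1) \<longleftrightarrow> (u \<in> ?S \<and> card {v \<in> ?S. map sym_idx v < map sym_idx u} < ?b)"
      using code_length_iff[of u ?h] by (auto simp: cell_def info_def lex_rank_def)
  qed
  also have "card \<dots> = min (card ?S) ?b"
    using inj_on_subset[OF inj_mapI[OF inj_sym_idx]] by (intro card_rank_less finite_cell) auto
  finally have "card {u \<in> ?S. real (length (code u)) = Kc u - 1} = min (4 * jterm ?h i) ?b"
    by (simp add: card_cell jterm_def)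
  moreover have "jpart ?h (Suc i) \<le> jac ?h"
    by (rule jpart_le_jac)
  ultimately show ?thesis
    by (simp add: good_count_def jbal_def of_nat_diff)
qed

lemma prob_I_Suc:
  "prob_I (Suc N) = (\<Sum>i\<le>N. (1 / 2) ^ (N + i + 2) * real (card {u \<in> cell (Suc N) i. real (length (code u)) = Kc u - 1}))"
proof -
  let ?U = "{u. length u = Suc N \<and> admissible u}"
  let ?f = "\<lambda>u. if real (length (code u)) = Kc u - 1 then str_prob u else 0"
  have "heavy ` ?U \<subseteq> {..N}"
    using heavy_less_length by fastforce
  then have "prob_I (Suc N) = (\<Sum>i\<le>N. sum ?f {u \<in> ?U. heavy u = i})"
    unfolding prob_I_def by (intro sum.group[symmetric]) (auto intro: finite_subset[OF _ finite_length_le[of "Suc N"]])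
  also have "\<dots> = (\<Sum>i\<le>N. sum ?f (cell (Suc N) i))"
    by (intro sum.cong) (auto simp: cell_def)
  also have "\<dots> = (\<Sum>i\<le>N. (1 / 2) ^ (N + i + 2) * real (card {u \<in> cell (Suc N) i. real (length (code u)) = Kc u - 1}))"
  proof (rule sum.cong)
    fix i
    have "sum ?f (cell (Suc N) i) = (\<Sum>u\<in>cell (Suc N) i. if real (length (code u)) = Kc u - 1 then (1 / 2) ^ (N + i + 2) else 0)"
      by (intro sum.cong) (auto simp: cell_def str_prob_eq info_def)
    then show "sum ?f (cell (Suc N) i) = (1 / 2) ^ (N + i + 2) * real (card {u \<in> cell (Suc N) i. real (length (code u)) = Kc u - 1})"
      by (simp add: sum.inter_filter[symmetric] finite_cell)
  qed simp
  finally show ?thesis .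
qed

definition excess :: "nat \<Rightarrow> nat \<Rightarrow> real" where
  "excess N i = (1 / 2) ^ (N + i + 2) * (of_int (good_count N i) - 2 * real (jterm (N + i) i))"

lemma scaled_jterm: "(1 / 2) ^ (N + i + 2) * (2 * real (jterm (N + i) i)) = real (N choose i) / 2 ^ Suc N"
  by (simp add: jterm_def power_add field_simps)

lemma prob_I_Suc_excess: "prob_I (Suc N) = 1 / 2 + (\<Sum>i\<le>N. excess N i)"
proof -
  have "prob_I (Suc N) = (\<Sum>i\<le>N. excess N i + real (N choose i) / 2 ^ Suc N)"
    unfolding prob_I_Suc
  proof (rule sum.cong)
    fix i
    have "real (card {u \<in> cell (Suc N) i. real (length (code u)) = Kc u - 1}) = of_int (good_count N i)"
      unfolding card_code_good_cell[symmetric] by simp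
    then show "(1 / 2) ^ (N + i + 2) * real (card {u \<in> cell (Suc N) i. real (length (code u)) = Kc u - 1})
        = excess N i + real (N choose i) / 2 ^ Suc N"
      unfolding excess_def scaled_jterm[symmetric] by (simp add: algebra_simps)
  qed simp
  also have "\<dots> = (\<Sum>i\<le>N. excess N i) + (\<Sum>i\<le>N. real (N choose i)) / 2 ^ Suc N"
    by (simp add: sum.distrib sum_divide_distrib)
  also have "(\<Sum>i\<le>N. real (N choose i)) = 2 ^ N"
    using of_nat_sum[where 'a=real, of "\<lambda>i. N choose i" "{..N}"] choose_row_sum[of N] by simp
  finally show ?thesis
    by simp
qed

lemma excess_ge: "- (real (N choose i) / 2 ^ Suc N) \<le> excess N i"
proof -
  have "0 \<le> good_count N i"
    by (simp add: good_count_def)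
  then show ?thesis
    unfolding scaled_jterm[symmetric] excess_def by (simp add: algebra_simps)
qed

lemma excess_high: "N + 2 \<le> 2 * i \<Longrightarrow> excess N i = real (N choose i) / 2 ^ Suc N"
proof -
  assume "N + 2 \<le> 2 * i"
  then have "0 < jbal (N + i) i"
    by (intro jbal_pos) simp_all
  then have "good_count N i = 4 * int (jterm (N + i) i)"
    using jbal_Suc[of "N + i" i] by (simp add: good_count_def)
  then show ?thesis
    unfolding scaled_jterm[symmetric] excess_def by (simp add: algebra_simps)
qed

lemma excess_middle_even_pos: "0 < p \<Longrightarrow> 0 < excess (2 * p) p"
proof -
  assume "0 < p"
  have h: "2 * p + p = 3 * p"
    by simp
  have "0 < jterm (3 * p) p"
    by (simp add: jterm_def)
  then have "2 * int (jterm (3 * p) p) < good_count (2 * p) p"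
    unfolding good_count_def h using jbal_middle_even[OF \<open>0 < p\<close>] by simp
  then show ?thesis
    unfolding excess_def h by simp
qed

lemma excess_middle_even_nonneg: "0 \<le> excess (2 * p) p"
proof (cases "p = 0")
  case True
  then show ?thesis
    by (simp add: excess_def good_count_def jbal_def jac_def jpart_def)
qed (simp add: excess_middle_even_pos less_imp_le)

lemma excess_middle_odd: "0 < excess (2 * p + 1) p + excess (2 * p + 1) (Suc p)"
proof -
  let ?T = "int (jterm (3 * p + 1) p)"
  let ?e = "jbal (3 * p + 1) (Suc p)"
  have h: "2 * p + 1 + p = 3 * p + 1" "2 * p + 1 + Suc p = 3 * p + 2"
    by simp_all
  have e_pos: "0 < ?e"
    by (rule jbal_pos) simp_all
  have "0 < jbal (3 * p + 2) (Suc (Suc p))"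
    by (rule jbal_pos) simp_all
  moreover have "jbal (3 * p + 2) (Suc (Suc p)) = 4 * ?T - ?e"
    using jbal_Suc[of "3 * p + 2" "Suc p"] jbal_middle_odd[of p] jterm_middle_odd[of p] by simp
  ultimately have e_less: "?e < 4 * ?T"
    by simp
  have g1: "good_count (2 * p + 1) p = min (4 * ?T) (2 * ?e)"
    unfolding good_count_def h using e_pos by simp
  have g2: "good_count (2 * p + 1) (Suc p) = 8 * ?T - 2 * ?e"
    unfolding good_count_def h
    using jbal_Suc[of "3 * p + 2" "Suc p"] jbal_middle_odd[of p] jterm_middle_odd[of p] e_pos e_less
    by simp
  have pw: "(1 / 2 :: real) ^ (3 * p + 1 + 2) = 2 * (1 / 2) ^ (3 * p + 2 + 2)"
    by simp
  have sum_eq: "excess (2 * p + 1) p + excess (2 * p + 1) (Suc p)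
      = (1 / 2) ^ (3 * p + 2 + 2) * (2 * of_int (min (4 * ?T) (2 * ?e)) - 2 * of_int ?e)"
    unfolding excess_def g1 g2 h jterm_middle_odd pw by (simp add: algebra_simps)
  have "(of_int ?e :: real) < of_int (min (4 * ?T) (2 * ?e))"
    using e_pos e_less by simp
  then show ?thesis
    unfolding sum_eq by (intro mult_pos_pos) simp_all
qed

lemma excess_pair_nonneg: "i \<le> N \<Longrightarrow> 0 \<le> excess N i + excess N (N - i)"
proof -
  assume "i \<le> N"
  then have sym: "real (N choose (N - i)) = real (N choose i)"
    by (simp add: binomial_symmetric[symmetric])
  show ?thesis
  proof (cases "N + 2 \<le> 2 * i")
    case True
    then show ?thesis
      using excess_high[of N i] excess_ge[of N "N - i"] sym by simp
  next
    case low: False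
    show ?thesis
    proof (cases "N + 2 \<le> 2 * (N - i)")
      case True
      then show ?thesis
        using excess_high[of N "N - i"] excess_ge[of N i] sym by simp
    next
      case high: False
      have "\<exists>p. N = 2 * p \<and> i = p \<or> N = 2 * p + 1 \<and> (i = p \<or> i = Suc p)"
        using \<open>i \<le> N\<close> low high by presburger
      then obtain p where "N = 2 * p \<and> i = p \<or> N = 2 * p + 1 \<and> (i = p \<or> i = Suc p)"
        by blast
      then show ?thesis
        using excess_middle_even_nonneg[of p] excess_middle_odd[of p] by auto
    qed
  qed
qed

lemma excess_middle_pos: "0 < N \<Longrightarrow> 0 < excess N (N div 2) + excess N (N - N div 2)"
proof -
  assume "0 < N"
  have "\<exists>p. N = 2 * p \<and> 0 < p \<or> N = 2 * p + 1"
    using \<open>0 < N\<close> by presburger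
  then obtain p where "N = 2 * p \<and> 0 < p \<or> N = 2 * p + 1"
    by blast
  then show ?thesis
    using excess_middle_even_pos[of p] excess_middle_odd[of p] by auto
qed

lemma sum_excess_nonneg: "0 \<le> (\<Sum>i\<le>N. excess N i)"
  and sum_excess_pos: "0 < N \<Longrightarrow> 0 < (\<Sum>i\<le>N. excess N i)"
proof -
  have "(\<Sum>i\<le>N. excess N (N - i)) = (\<Sum>i\<le>N. excess N i)"
    using sum.atLeastAtMost_rev[of "excess N" 0 N] by (simp add: atLeast0AtMost)
  then have pairs: "2 * (\<Sum>i\<le>N. excess N i) = (\<Sum>i\<le>N. excess N i + excess N (N - i))"
    by (simp add: sum.distrib)
  have "0 \<le> (\<Sum>i\<le>N. excess N i + excess N (N - i))"
    by (intro sum_nonneg) (simp add: excess_pair_nonneg)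
  with pairs show "0 \<le> (\<Sum>i\<le>N. excess N i)"
    by simp
  assume "0 < N"
  then have "0 < (\<Sum>i\<le>N. excess N i + excess N (N - i))"
    by (intro sum_pos2[of _ "N div 2"]) (simp_all add: excess_pair_nonneg excess_middle_pos)
  with pairs show "0 < (\<Sum>i\<le>N. excess N i)"
    by simp
qed

theorem mainTheorem12:
  fixes n :: nat
  assumes "n \<ge> 1"
  shows "prob_I n \<ge> 1/2 \<and> (n \<ge> 2 \<longrightarrow> prob_I n > 1/2)"
proof -
  obtain N where n: "n = Suc N"
    using assms by (cases n) simp_all
  show ?thesis
    unfolding n prob_I_Suc_excess using sum_excess_nonneg[of N] sum_excess_pos[of N] by simp
qed

end
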